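(* Consider an assignment of weight matrices $(W^{(\nu)}\in\mathbb R^{R_\nu\times R_{Pa(\nu)}})_{\nu\in\mathcal T}$ of a hierarchical tensor factorization with mode tree $\mathcal T$ over $[N]$ and end tensor $\mathcal W_H$, and let $B:=\max_{\nu\in\mathcal T}\|W^{(\nu)}\|$. Assume that at each $\nu\in\mathrm{int}(\mathcal T)$ the local components are ordered by their norms, i.e. $\sigma_{\nu,1}\ge\cdots\ge\sigma_{\nu,R_\nu}$. Then for any $\epsilon\ge0$ and $(R'_\nu\in\mathbb N)_{\nu\in\mathrm{int}(\mathcal T)}$, if $\sum_{r=R'_\nu+1}^{R_\nu}\sigma_{\nu,r}\le\epsilon\cdot(|\mathcal T|-N)^{-1}B^{|C(\nu)|+1-|\mathcal T|}$ for all $\nu\in\mathrm{int}(\mathcal T)$, then $$\inf_{\substack{\mathcal W\in\mathbb R^{D_1\times\cdots\times D_N}:\\ \forall\nu\in\mathcal T\setminus\{[N]\}:\ \mathrm{rank}\,[\![\mathcal W;\nu]\!]\le R'_{Pa(\nu)}}}\|\mathcal W_H-\mathcal W\|\le\epsilon,$$ with the convention $R'_{[N]}$ as given for the root ($[N]\in\mathrm{int}(\mathcal T)$).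
   Context: Fix $N\in\mathbb N$, $D_1,\dots,D_N\in\mathbb N$; $[K]:=\{1,\dots,K\}$. Norms are Frobenius norms, $\otimes$ the tensor product. A mode tree $\mathcal T$ over $[N]$ is a rooted tree whose nodes are labeled by subsets of $[N]$, with exactly $N$ leaves labeled $\{1\},\dots,\{N\}$, and where each interior node's label is the union of its children's labels; nodes are identified with labels, root $[N]$, $|\mathcal T|$ the number of nodes, $\mathrm{int}(\mathcal T)$ interior nodes, $Pa(\nu)$ parent, $C(\nu)$ children (fixed order). A hierarchical tensor factorization is given by $R_\nu\in\mathbb N$ ($\nu\in\mathrm{int}(\mathcal T)$), with $R_{Pa([N])}:=1$, $R_{\{n\}}:=D_n$, and weight matrices $W^{(\nu)}\in\mathbb R^{R_\nu\times R_{Pa(\nu)}}$. Intermediate tensors: $\mathcal W^{(\{n\},r)}:=W^{(\{n\})}_{:,r}$; for $\nu\in\mathrm{int}(\mathcal T)\setminus\{[N]\}$ (leaves to root), $r\in[R_{Pa(\nu)}]$: $\mathcal W^{(\nu,r)}:=\pi_\nu\big(\sum_{r'=1}^{R_\nu}W^{(\nu)}_{r',r}\bigotimes_{\nu_c\in C(\nu)}\mathcal W^{(\nu_c,r')}\big)$; end tensor $\mathcal W_H:=\pi_{[N]}\big(\sum_{r'=1}^{R_{[N]}}W^{([N])}_{r',1}\bigotimes_{\nu_c\in C([N])}\mathcal W^{(\nu_c,r')}\big)$, where $\pi_\nu$ permutes modes (ordered by children, each child's elements ascending) into ascending order of the elements of $\nu$. The norm of the $(\nu,r)$'th local component ($\nu\in\mathrm{int}(\mathcal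 T)$, $r\in[R_\nu]$) is $\sigma_{\nu,r}:=\|W^{(\nu)}_{r,:}\|\prod_{\nu_c\in C(\nu)}\|W^{(\nu_c)}_{:,r}\|$. The matricization $[\![\mathcal W;I]\!]$ of $\mathcal W\in\mathbb R^{D_1\times\cdots\times D_N}$ w.r.t. $I\subset[N]$ is its arrangement as a $\prod_{i\in I}D_i\times\prod_{j\notin I}D_j$ matrix whose rows are indexed by the modes in $I$ and columns by the remaining modes (with $I=\{i_1<\dots\}$, $[N]\setminus I=\{j_1<\dots\}$, entry $\mathcal W_{d_1,\dots,d_N}$ goes to row $1+\sum_l(d_{i_l}-1)\prod_{l'<l}D_{i_{l'}}$ and column $1+\sum_l(d_{j_l}-1)\prod_{l'<l}D_{j_{l'}}$). *)

theory Defs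
  imports Complex_Main "Jordan_Normal_Form.DL_Rank"
begin

text \<open>A mode tree over [N], with nodes identified with their labels, is the same as a
laminar family of nonempty subsets of {1..N} containing {1..N} and all singletons.\<close>

definition mode_tree :: "nat \<Rightarrow> nat set set \<Rightarrow> bool" where
  "mode_tree N T \<longleftrightarrow>
     (\<forall>\<nu>\<in>T. \<nu> \<subseteq> {1..N} \<and> \<nu> \<noteq> {}) \<and> {1..N} \<in> T \<and> (\<forall>n\<in>{1..N}. {n} \<in> T) \<and>
     (\<forall>A\<in>T. \<forall>B\<in>T. A \<subseteq> B \<or> B \<subseteq> A \<or> A \<inter> B = {})"

definition children :: "nat set set \<Rightarrow> nat set \<Rightarrow> nat set set" where
  "children T \<nu> = {c \<in> T. c \<subset> \<nu> \<and> \<not> (\<exists>c'\<in>T. c \<subset> c' \<and> c' \<subset> \<nu>)}"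

definition parent :: "nat set set \<Rightarrow> nat set \<Rightarrow> nat set" where
  "parent T \<nu> = (THE p. p \<in> T \<and> \<nu> \<in> children T p)"

definition interior :: "nat set set \<Rightarrow> nat set set" where
  "interior T = {\<nu> \<in> T. children T \<nu> \<noteq> {}}"

text \<open>Weight matrices are given as W :: nat set => nat => nat => real, with
W \<nu> i j the (i+1,j+1) entry of W^(\<nu>) (0-based indices).  The effective number of rows of W^(\<nu>) is rk, with rk {n} = D n for
leaves; its number of columns is prk (R_{Pa(\<nu>)}), with value 1 at the root.\<close>

definition rk :: "nat set set \<Rightarrow> (nat \<Rightarrow> nat) \<Rightarrow> (nat set \<Rightarrow> nat) \<Rightarrow> nat set \<Rightarrow> nat" where
  "rk T D R \<nu> = (if \<nu> \<in> interior T then R \<nu> else D (THE n. \<nu> = {n}))"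

definition prk :: "nat \<Rightarrow> nat set set \<Rightarrow> (nat \<Rightarrow> nat) \<Rightarrow> (nat set \<Rightarrow> nat) \<Rightarrow> nat set \<Rightarrow> nat" where
  "prk N T D R \<nu> = (if \<nu> = {1..N} then 1 else rk T D R (parent T \<nu>))"

text \<open>Tensors in R^{D_1 x ... x D_N} are functions from index tuples d (with
d n < D n, 0-based) to reals; only values on the index box matter.\<close>

definition idx_box :: "nat \<Rightarrow> (nat \<Rightarrow> nat) \<Rightarrow> (nat \<Rightarrow> nat) set" where
  "idx_box N D = PiE {1..N} (\<lambda>n. {..<D n})"

definition tnorm :: "nat \<Rightarrow> (nat \<Rightarrow> nat) \<Rightarrow> ((nat \<Rightarrow> nat) \<Rightarrow> real) \<Rightarrow> real" where
  "tnorm N D X = sqrt (\<Sum>d\<in>idx_box N D. (X d)\<^sup>2)"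

text \<open>Intermediate tensors W^(\<nu>,r), evaluated at an index tuple d (the mode
permutation pi_\<nu> is implicit since modes are addressed by their labels).  The
recursion is on the tree, realised with a fuel argument k; the fuel card \<nu> suffices
since children have strictly smaller cardinality and leaves are singletons.\<close>

fun comp_aux :: "nat set set \<Rightarrow> (nat \<Rightarrow> nat) \<Rightarrow> (nat set \<Rightarrow> nat) \<Rightarrow> (nat set \<Rightarrow> nat \<Rightarrow> nat \<Rightarrow> real)
    \<Rightarrow> nat \<Rightarrow> nat set \<Rightarrow> nat \<Rightarrow> (nat \<Rightarrow> nat) \<Rightarrow> real" where
  "comp_aux T D R W 0 \<nu> r d = 0"
| "comp_aux T D R W (Suc k) \<nu> r d =
     (if \<nu> \<in> interior T then
        (\<Sum>r'<R \<nu>. W \<nu> r' r * (\<Prod>c\<in>children T \<nu>. comp_aux T D R W k c r' d))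
      else W \<nu> (d (THE n. \<nu> = {n})) r)"

definition comp :: "nat set set \<Rightarrow> (nat \<Rightarrow> nat) \<Rightarrow> (nat set \<Rightarrow> nat) \<Rightarrow> (nat set \<Rightarrow> nat \<Rightarrow> nat \<Rightarrow> real)
    \<Rightarrow> nat set \<Rightarrow> nat \<Rightarrow> (nat \<Rightarrow> nat) \<Rightarrow> real" where
  "comp T D R W \<nu> r d = comp_aux T D R W (card \<nu>) \<nu> r d"

definition end_tensor :: "nat \<Rightarrow> nat set set \<Rightarrow> (nat \<Rightarrow> nat) \<Rightarrow> (nat set \<Rightarrow> nat)
    \<Rightarrow> (nat set \<Rightarrow> nat \<Rightarrow> nat \<Rightarrow> real) \<Rightarrow> (nat \<Rightarrow> nat) \<Rightarrow> real" where
  "end_tensor N T D R W d = comp T D R W {1..N} 0 d"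

definition wnorm where
  "wnorm N T D R W \<nu> = sqrt (\<Sum>i<rk T D R \<nu>. \<Sum>j<prk N T D R \<nu>. (W \<nu> i j)\<^sup>2)"

definition rownorm where
  "rownorm N T D R W \<nu> r = sqrt (\<Sum>j<prk N T D R \<nu>. (W \<nu> r j)\<^sup>2)"

definition colnorm where
  "colnorm N T D R W \<nu> r = sqrt (\<Sum>i<rk T D R \<nu>. (W \<nu> i r)\<^sup>2)"

text \<open>Norm of the local component (\<nu>, r+1).\<close>
definition sigma where
  "sigma N T D R W \<nu> r =
     rownorm N T D R W \<nu> r * (\<Prod>c\<in>children T \<nu>. colnorm N T D R W c r)"

text \<open>Mixed-radix digit of position i in a linear index p over the modes I
(little-endian, as in the paper, 0-based).\<close>
definition digit :: "(nat \<Rightarrow> nat) \<Rightarrow> nat set \<Rightarrow> nat \<Rightarrow> nat \<Rightarrow> nat" where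
  "digit D I p i = (p div (\<Prod>j\<in>{j\<in>I. j < i}. D j)) mod D i"

definition decode :: "nat \<Rightarrow> (nat \<Rightarrow> nat) \<Rightarrow> nat set \<Rightarrow> nat \<Rightarrow> nat \<Rightarrow> (nat \<Rightarrow> nat)" where
  "decode N D I p q = (\<lambda>i. if i \<in> I then digit D I p i
                           else if i \<in> {1..N} - I then digit D ({1..N} - I) q i
                           else undefined)"

definition matricize :: "nat \<Rightarrow> (nat \<Rightarrow> nat) \<Rightarrow> ((nat \<Rightarrow> nat) \<Rightarrow> real) \<Rightarrow> nat set \<Rightarrow> real mat" where
  "matricize N D X I = mat (\<Prod>i\<in>I. D i) (\<Prod>j\<in>{1..N} - I. D j)
      (\<lambda>(p, q). X (decode N D I p q))"

definition mrank :: "real mat \<Rightarrow> nat" where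
  "mrank A = vec_space.rank (dim_row A) A"

end

theory Submission
  imports Defs "HOL-Analysis.L2_Norm"
begin

(* Truncate every interior node \<nu> to its first min (R \<nu>) (R' \<nu>) local components.  The
   truncated end tensor factors through the intermediate tensors of every node \<nu>, so its
   matricization at \<nu> has rank at most R'(Pa \<nu>).  The truncation error at \<nu> splits into the
   discarded components, of norm at most (\<Sum>r\<ge>R' \<nu>. \<sigma>(\<nu>,r)) B^(|subtree \<nu>| - 1 - |C \<nu>|), and the
   errors of the children, amplified by at most B^(|subtree \<nu>| - |subtree c|); here the key
   estimate is that the family of intermediate tensors of a subtree with k nodes has Frobenius
   norm at most B^k (Cauchy-Schwarz at every node).  Unfolding this recursion, the error at the
   root is a sum of |T| - N tail terms, each at most \<epsilon> / (|T| - N) by hypothesis. *)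

section \<open>L2 norms of finite families\<close>

lemma L2_set_Times: "L2_set (\<lambda>(i, j). f i j) (I \<times> J) = L2_set (\<lambda>i. L2_set (f i) J) I"
  unfolding L2_set_def by (simp add: sum_nonneg sum.cartesian_product split_def)

lemma L2_set_Times_swap: "L2_set (\<lambda>(i, j). f i j) (I \<times> J) = L2_set (\<lambda>j. L2_set (\<lambda>i. f i j) I) J"
  unfolding L2_set_Times by (simp add: L2_set_def sum_nonneg sum.swap [of _ I])

lemma L2_set_Times_mult: "L2_set (\<lambda>(r, d). a r * b d) (I \<times> A) = L2_set a I * L2_set b A"
  unfolding L2_set_def real_sqrt_mult [symmetric] sum_product
  by (simp add: sum.cartesian_product' power_mult_distrib)

lemma L2_set_subset_le: "finite B \<Longrightarrow> A \<subseteq> B \<Longrightarrow> L2_set f A \<le> L2_set f B"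
  unfolding L2_set_def by (intro real_sqrt_le_mono sum_mono2) auto

lemma L2_set_sum_le: "finite K \<Longrightarrow> L2_set (\<lambda>x. \<Sum>k\<in>K. f k x) A \<le> (\<Sum>k\<in>K. L2_set (f k) A)"
proof (induction K rule: finite_induct)
  case (insert k K)
  then show ?case
    using L2_set_triangle_ineq [of "f k" "\<lambda>x. \<Sum>k\<in>K. f k x" A] by simp
qed (simp add: L2_set_def)

lemma abs_sum_mult_le_L2_set: "\<bar>\<Sum>k\<in>K. f k * g k\<bar> \<le> L2_set f K * L2_set g K"
  by (rule order_trans [OF sum_abs]) (simp add: abs_mult L2_set_mult_ineq)

lemma real_sqrt_prod: "sqrt (\<Prod>c\<in>C. f c) = (\<Prod>c\<in>C. sqrt (f c))"
  by (induction C rule: infinite_finite_induct) (auto simp: real_sqrt_mult)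

lemma L2_set_sum_mult_le:
  "L2_set (\<lambda>d. \<Sum>k\<in>K. w k * G k d) A \<le> L2_set w K * L2_set (\<lambda>(k, d). G k d) (K \<times> A)"
proof -
  have "L2_set (\<lambda>d. \<Sum>k\<in>K. w k * G k d) A = L2_set (\<lambda>d. \<bar>\<Sum>k\<in>K. w k * G k d\<bar>) A"
    by (simp add: L2_set_def)
  also have "\<dots> \<le> L2_set (\<lambda>d. L2_set w K * L2_set (\<lambda>k. G k d) K) A"
    using abs_sum_mult_le_L2_set by (intro L2_set_mono) auto
  also have "\<dots> = L2_set w K * L2_set (\<lambda>(k, d). G k d) (K \<times> A)"
    by (simp add: L2_set_right_distrib [symmetric] L2_set_Times_swap)
  finally show ?thesis .
qed

lemma L2_set_matrix_mult_le:
  "L2_set (\<lambda>(r, d). \<Sum>k\<in>K. w k r * G k d) (I \<times> A)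
     \<le> L2_set (\<lambda>(k, r). w k r) (K \<times> I) * L2_set (\<lambda>(k, d). G k d) (K \<times> A)"
proof -
  have "L2_set (\<lambda>(r, d). \<Sum>k\<in>K. w k r * G k d) (I \<times> A)
      = L2_set (\<lambda>r. L2_set (\<lambda>d. \<Sum>k\<in>K. w k r * G k d) A) I"
    by (rule L2_set_Times)
  also have "\<dots> \<le> L2_set (\<lambda>r. L2_set (\<lambda>k. w k r) K * L2_set (\<lambda>(k, d). G k d) (K \<times> A)) I"
    using L2_set_sum_mult_le by (intro L2_set_mono) auto
  also have "\<dots> = L2_set (\<lambda>(k, r). w k r) (K \<times> I) * L2_set (\<lambda>(k, d). G k d) (K \<times> A)"
    by (simp add: L2_set_left_distrib [symmetric] L2_set_Times_swap)
  finally show ?thesis .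
qed

lemma sum_prod_le_prod_sum:
  fixes x :: "'c \<Rightarrow> 'k \<Rightarrow> real"
  assumes "finite C" "C \<noteq> {}" "finite K" "\<And>c k. 0 \<le> x c k"
  shows "(\<Sum>k\<in>K. \<Prod>c\<in>C. x c k) \<le> (\<Prod>c\<in>C. \<Sum>k\<in>K. x c k)"
  using assms(1,2)
proof (induction C rule: finite_ne_induct)
  case (insert a C)
  have "(\<Sum>k\<in>K. x a k * (\<Prod>c\<in>C. x c k)) \<le> (\<Sum>k\<in>K. x a k * (\<Sum>k'\<in>K. \<Prod>c\<in>C. x c k'))"
    using assms(3,4) by (intro sum_mono mult_left_mono member_le_sum prod_nonneg) auto
  also have "\<dots> \<le> (\<Sum>k\<in>K. x a k) * (\<Prod>c\<in>C. \<Sum>k\<in>K. x c k)"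
    using insert.IH assms(4) by (simp add: sum_distrib_right [symmetric] mult_left_mono sum_nonneg)
  finally show ?case using insert.hyps by simp
qed simp

lemma L2_set_prod_le:
  assumes "finite C" "C \<noteq> {}" "finite K"
  shows "L2_set (\<lambda>k. \<Prod>c\<in>C. x c k) K \<le> (\<Prod>c\<in>C. L2_set (x c) K)"
  unfolding L2_set_def real_sqrt_prod [symmetric] prod_power_distrib
  using sum_prod_le_prod_sum [OF assms, of "\<lambda>c k. (x c k)\<^sup>2"] by simp

section \<open>Index boxes of tensor modes\<close>

definition mode_box :: "(nat \<Rightarrow> nat) \<Rightarrow> nat set \<Rightarrow> (nat \<Rightarrow> nat) set" where
  "mode_box D A = PiE A (\<lambda>n. {..<D n})"

definition depends_only_on :: "'i set \<Rightarrow> (('i \<Rightarrow> 'a) \<Rightarrow> 'b) \<Rightarrow> bool" where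
  "depends_only_on A f \<longleftrightarrow> (\<forall>d d'. (\<forall>i\<in>A. d i = d' i) \<longrightarrow> f d = f d')"

lemma depends_only_onI:
  "(\<And>d d'. (\<And>i. i \<in> A \<Longrightarrow> d i = d' i) \<Longrightarrow> f d = f d') \<Longrightarrow> depends_only_on A f"
  unfolding depends_only_on_def by blast

lemma depends_only_onD: "depends_only_on A f \<Longrightarrow> (\<And>i. i \<in> A \<Longrightarrow> d i = d' i) \<Longrightarrow> f d = f d'"
  unfolding depends_only_on_def by blast

lemma depends_only_on_mono: "A \<subseteq> B \<Longrightarrow> depends_only_on A f \<Longrightarrow> depends_only_on B f"
  unfolding depends_only_on_def by blast

lemma depends_only_on_restrict: "depends_only_on A f \<Longrightarrow> f (restrict d A) = f d"
  by (erule depends_only_onD) simp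

lemma depends_only_on_compose:
  "depends_only_on A f \<Longrightarrow> depends_only_on A (\<lambda>d. h (f d))"
  unfolding depends_only_on_def by metis

lemma depends_only_on_compose2:
  "depends_only_on A f \<Longrightarrow> depends_only_on A g \<Longrightarrow> depends_only_on A (\<lambda>d. h (f d) (g d))"
  unfolding depends_only_on_def by metis

lemma depends_only_on_prod:
  assumes "\<And>c. c \<in> C \<Longrightarrow> depends_only_on c (f c)"
  shows "depends_only_on (\<Union>C) (\<lambda>d. \<Prod>c\<in>C. f c d)"
proof (rule depends_only_onI)
  fix d d' :: "'a \<Rightarrow> 'b" assume eq: "\<And>i. i \<in> \<Union>C \<Longrightarrow> d i = d' i"
  have "f c d = f c d'" if "c \<in> C" for c
    by (rule depends_only_onD [OF assms [OF that]]) (use eq that in blast)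
  then show "(\<Prod>c\<in>C. f c d) = (\<Prod>c\<in>C. f c d')"
    by (rule prod.cong [OF refl])
qed

lemma depends_only_on_sum:
  fixes f :: "'k \<Rightarrow> ('i \<Rightarrow> 'a) \<Rightarrow> 'b::comm_monoid_add"
  assumes "\<And>k. k \<in> K \<Longrightarrow> depends_only_on A (f k)"
  shows "depends_only_on A (\<lambda>d. \<Sum>k\<in>K. f k d)"
proof (rule depends_only_onI)
  fix d d' :: "'i \<Rightarrow> 'a" assume eq: "\<And>i. i \<in> A \<Longrightarrow> d i = d' i"
  have "f k d = f k d'" if "k \<in> K" for k
    by (rule depends_only_onD [OF assms [OF that]]) (rule eq)
  then show "(\<Sum>k\<in>K. f k d) = (\<Sum>k\<in>K. f k d')"
    by (rule sum.cong [OF refl])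
qed

lemma finite_mode_box: "finite A \<Longrightarrow> finite (mode_box D A)"
  unfolding mode_box_def by (intro finite_PiE) auto

lemma bij_betw_restrict_mode_box:
  assumes "A \<inter> B = {}"
  shows "bij_betw (\<lambda>d. (restrict d A, restrict d B)) (mode_box D (A \<union> B)) (mode_box D A \<times> mode_box D B)"
proof (rule bij_betw_byWitness [where f' = "\<lambda>(x, y) i. if i \<in> A then x i else y i"])
  show "\<forall>d\<in>mode_box D (A \<union> B). (\<lambda>(x, y) i. if i \<in> A then x i else y i) (restrict d A, restrict d B) = d"
    by (auto simp: mode_box_def PiE_def extensional_def fun_eq_iff)
  show "\<forall>p\<in>mode_box D A \<times> mode_box D B.
      (\<lambda>d. (restrict d A, restrict d B)) ((\<lambda>(x, y) i. if i \<in> A then x i else y i) p) = p"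
    using assms by (auto simp: mode_box_def PiE_def extensional_def fun_eq_iff)
qed (use assms in \<open>auto simp: mode_box_def PiE_def extensional_def\<close>)

lemma sum_mode_box_Un_mult:
  fixes f g :: "(nat \<Rightarrow> nat) \<Rightarrow> real"
  assumes "A \<inter> B = {}" "depends_only_on A f" "depends_only_on B g"
  shows "(\<Sum>d\<in>mode_box D (A \<union> B). f d * g d) = (\<Sum>d\<in>mode_box D A. f d) * (\<Sum>d\<in>mode_box D B. g d)"
proof -
  have "(\<Sum>d\<in>mode_box D (A \<union> B). f d * g d)
      = (\<Sum>d\<in>mode_box D (A \<union> B). (\<lambda>(x, y). f x * g y) (restrict d A, restrict d B))"
    using assms(2,3) by (simp add: depends_only_on_restrict)
  also have "\<dots> = (\<Sum>(x, y)\<in>mode_box D A \<times> mode_box D B. f x * g y)"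
    by (rule sum.reindex_bij_betw [OF bij_betw_restrict_mode_box [OF assms(1)]])
  finally show ?thesis by (simp add: sum_product sum.cartesian_product)
qed

lemma L2_set_mode_box_Un_mult:
  assumes "A \<inter> B = {}" "depends_only_on A f" "depends_only_on B g"
  shows "L2_set (\<lambda>d. f d * g d) (mode_box D (A \<union> B)) = L2_set f (mode_box D A) * L2_set g (mode_box D B)"
proof -
  have "(\<Sum>d\<in>mode_box D (A \<union> B). (f d)\<^sup>2 * (g d)\<^sup>2)
      = (\<Sum>d\<in>mode_box D A. (f d)\<^sup>2) * (\<Sum>d\<in>mode_box D B. (g d)\<^sup>2)"
    using assms by (intro sum_mode_box_Un_mult depends_only_on_compose [OF assms(2)]
        depends_only_on_compose [OF assms(3)])
  then show ?thesis
    unfolding L2_set_def power_mult_distrib by (simp add: real_sqrt_mult)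
qed

lemma L2_set_mode_box_prod:
  assumes "finite C" "pairwise disjnt C" "\<And>c. c \<in> C \<Longrightarrow> depends_only_on c (f c)"
  shows "L2_set (\<lambda>d. \<Prod>c\<in>C. f c d) (mode_box D (\<Union>C)) = (\<Prod>c\<in>C. L2_set (f c) (mode_box D c))"
  using assms
proof (induction C rule: finite_induct)
  case empty
  then show ?case by (simp add: mode_box_def L2_set_def)
next
  case (insert x S)
  then have "x \<inter> \<Union>S = {}"
    by (auto simp: pairwise_insert disjnt_def)
  with insert show ?case
    by (simp add: L2_set_mode_box_Un_mult depends_only_on_prod pairwise_insert)
qed

lemma L2_set_mode_box_singleton:
  "L2_set (\<lambda>d. f (d n)) (mode_box D {n}) = L2_set f {..<D n}"
proof -
  have "bij_betw (\<lambda>d. d n) (mode_box D {n}) {..<D n}"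
    by (rule bij_betw_byWitness [where f' = "\<lambda>k. restrict (\<lambda>_. k) {n}"])
      (auto simp: mode_box_def PiE_def extensional_def fun_eq_iff)
  then show ?thesis
    unfolding L2_set_def by (simp add: sum.reindex_bij_betw [of _ _ _ "\<lambda>k. (f k)\<^sup>2"])
qed

lemma L2_set_Times_mode_box_mult_le:
  assumes "A \<inter> B = {}" "0 \<le> M"
    and "\<And>r. depends_only_on A (g r)" "\<And>r. depends_only_on B (h r)"
    and "\<And>r. r \<in> I \<Longrightarrow> L2_set (g r) (mode_box D A) \<le> M"
  shows "L2_set (\<lambda>(r, d). g r d * h r d) (I \<times> mode_box D (A \<union> B))
    \<le> M * L2_set (\<lambda>(r, d). h r d) (I \<times> mode_box D B)"
proof -
  have "L2_set (\<lambda>(r, d). g r d * h r d) (I \<times> mode_box D (A \<union> B))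
      = L2_set (\<lambda>r. L2_set (g r) (mode_box D A) * L2_set (h r) (mode_box D B)) I"
    by (simp add: L2_set_Times L2_set_mode_box_Un_mult assms)
  also have "\<dots> \<le> L2_set (\<lambda>r. M * L2_set (h r) (mode_box D B)) I"
    using assms(5) by (intro L2_set_mono mult_right_mono) auto
  also have "\<dots> = M * L2_set (\<lambda>(r, d). h r d) (I \<times> mode_box D B)"
    by (simp add: L2_set_right_distrib [symmetric] L2_set_Times assms(2))
  finally show ?thesis .
qed

lemma sum_mult_prod_others_insert:
  fixes E M :: "'c \<Rightarrow> real"
  assumes "finite S" "x \<notin> S"
  shows "(\<Sum>c\<in>insert x S. E c * (\<Prod>c'\<in>insert x S - {c}. M c'))
    = M x * (\<Sum>c\<in>S. E c * (\<Prod>c'\<in>S - {c}. M c')) + (\<Prod>c\<in>S. M c) * E x"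
proof -
  have "(\<Prod>c'\<in>insert x S - {c}. M c') = M x * (\<Prod>c'\<in>S - {c}. M c')" if "c \<in> S" for c
    using assms that by (auto simp: insert_Diff_if)
  with assms show ?thesis
    by (simp add: sum_distrib_left algebra_simps Diff_insert_absorb cong: sum.cong)
qed

lemma L2_set_prod_diff_le:
  fixes a b :: "nat set \<Rightarrow> 'r \<Rightarrow> (nat \<Rightarrow> nat) \<Rightarrow> real"
  assumes "finite C" "pairwise disjnt C"
    and "\<And>c r. c \<in> C \<Longrightarrow> depends_only_on c (a c r)" "\<And>c r. c \<in> C \<Longrightarrow> depends_only_on c (b c r)"
    and "\<And>c. c \<in> C \<Longrightarrow> 0 \<le> M c"
    and "\<And>c r. c \<in> C \<Longrightarrow> r \<in> I \<Longrightarrow> L2_set (a c r) (mode_box D c) \<le> M c"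
    and "\<And>c r. c \<in> C \<Longrightarrow> r \<in> I \<Longrightarrow> L2_set (b c r) (mode_box D c) \<le> M c"
  shows "L2_set (\<lambda>(r, d). (\<Prod>c\<in>C. a c r d) - (\<Prod>c\<in>C. b c r d)) (I \<times> mode_box D (\<Union>C))
    \<le> (\<Sum>c\<in>C. L2_set (\<lambda>(r, d). a c r d - b c r d) (I \<times> mode_box D c) * (\<Prod>c'\<in>C - {c}. M c'))"
  using assms
proof (induction C rule: finite_induct)
  case empty
  then show ?case by (simp add: L2_set_def)
next
  case (insert x S)
  let ?E = "\<lambda>c. L2_set (\<lambda>(r, d). a c r d - b c r d) (I \<times> mode_box D c)"
  let ?a = "\<lambda>r d. \<Prod>c\<in>S. a c r d" and ?b = "\<lambda>r d. \<Prod>c\<in>S. b c r d"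
  have disj: "x \<inter> \<Union>S = {}"
    using insert by (auto simp: pairwise_insert disjnt_def)
  have IH: "L2_set (\<lambda>(r, d). ?a r d - ?b r d) (I \<times> mode_box D (\<Union>S)) \<le> (\<Sum>c\<in>S. ?E c * (\<Prod>c'\<in>S - {c}. M c'))"
    using insert by (simp add: pairwise_insert)
  have loc_a: "depends_only_on (\<Union>S) (?a r)" and loc_b: "depends_only_on (\<Union>S) (?b r)" for r
    using insert by (auto intro: depends_only_on_prod)
  have b_le: "L2_set (?b r) (mode_box D (\<Union>S)) \<le> (\<Prod>c\<in>S. M c)" if "r \<in> I" for r
    using insert that by (simp add: L2_set_mode_box_prod pairwise_insert prod_mono)
  have "L2_set (\<lambda>(r, d). (\<Prod>c\<in>insert x S. a c r d) - (\<Prod>c\<in>insert x S. b c r d)) (I \<times> mode_box D (x \<union> \<Union>S))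
      = L2_set (\<lambda>p. (\<lambda>(r, d). a x r d * (?a r d - ?b r d)) p + (\<lambda>(r, d). ?b r d * (a x r d - b x r d)) p)
          (I \<times> mode_box D (x \<union> \<Union>S))"
    using insert.hyps by (intro L2_set_cong) (auto simp: algebra_simps)
  also have "\<dots> \<le> L2_set (\<lambda>(r, d). a x r d * (?a r d - ?b r d)) (I \<times> mode_box D (x \<union> \<Union>S))
      + L2_set (\<lambda>(r, d). ?b r d * (a x r d - b x r d)) (I \<times> mode_box D (\<Union>S \<union> x))"
    by (rule order_trans [OF L2_set_triangle_ineq]) (simp add: Un_commute)
  also have "\<dots> \<le> M x * (\<Sum>c\<in>S. ?E c * (\<Prod>c'\<in>S - {c}. M c')) + (\<Prod>c\<in>S. M c) * ?E x"
  proof (rule add_mono)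
    have "L2_set (\<lambda>(r, d). a x r d * (?a r d - ?b r d)) (I \<times> mode_box D (x \<union> \<Union>S))
        \<le> M x * L2_set (\<lambda>(r, d). ?a r d - ?b r d) (I \<times> mode_box D (\<Union>S))"
      using insert.prems disj loc_a loc_b
      by (intro L2_set_Times_mode_box_mult_le) (auto intro: depends_only_on_compose2)
    also have "\<dots> \<le> M x * (\<Sum>c\<in>S. ?E c * (\<Prod>c'\<in>S - {c}. M c'))"
      using IH insert.prems by (simp add: mult_left_mono)
    finally show "L2_set (\<lambda>(r, d). a x r d * (?a r d - ?b r d)) (I \<times> mode_box D (x \<union> \<Union>S))
        \<le> M x * (\<Sum>c\<in>S. ?E c * (\<Prod>c'\<in>S - {c}. M c'))" .
    show "L2_set (\<lambda>(r, d). ?b r d * (a x r d - b x r d)) (I \<times> mode_box D (\<Union>S \<union> x))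
        \<le> (\<Prod>c\<in>S. M c) * ?E x"
      using insert.prems disj loc_b b_le
      by (intro L2_set_Times_mode_box_mult_le) (auto intro: prod_nonneg depends_only_on_compose2)
  qed
  also have "\<dots> = (\<Sum>c\<in>insert x S. ?E c * (\<Prod>c'\<in>insert x S - {c}. M c'))"
    using sum_mult_prod_others_insert [OF insert.hyps] by simp
  finally show ?case by simp
qed

section \<open>Mode trees\<close>

locale fixed_mode_tree =
  fixes N :: nat and T :: "nat set set"
  assumes mode_tree: "mode_tree N T"
begin

lemma node_subset: "\<nu> \<in> T \<Longrightarrow> \<nu> \<subseteq> {1..N}"
  and node_nonempty: "\<nu> \<in> T \<Longrightarrow> \<nu> \<noteq> {}"
  and root_in_T: "{1..N} \<in> T"
  and singleton_in_T: "n \<in> {1..N} \<Longrightarrow> {n} \<in> T"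
  and laminar: "A \<in> T \<Longrightarrow> B \<in> T \<Longrightarrow> A \<subseteq> B \<or> B \<subseteq> A \<or> A \<inter> B = {}"
  using mode_tree unfolding mode_tree_def by blast+

lemma finite_node: "\<nu> \<in> T \<Longrightarrow> finite \<nu>"
  using node_subset finite_subset by blast

lemma finite_T: "finite T"
proof -
  have "T \<subseteq> Pow {1..N}"
    using node_subset by blast
  then show ?thesis
    by (rule finite_subset) simp
qed

lemma card_node_pos: "\<nu> \<in> T \<Longrightarrow> 0 < card \<nu>"
  using finite_node node_nonempty by (simp add: card_gt_0_iff)

lemma child_in_T: "c \<in> children T \<nu> \<Longrightarrow> c \<in> T"
  and child_psubset: "c \<in> children T \<nu> \<Longrightarrow> c \<subset> \<nu>"
  and child_maximal: "c \<in> children T \<nu> \<Longrightarrow> c' \<in> T \<Longrightarrow> c \<subset> c' \<Longrightarrow> c' \<subset> \<nu> \<Longrightarrow> False"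
  unfolding children_def by blast+

lemma childI: "c \<in> T \<Longrightarrow> c \<subset> \<nu> \<Longrightarrow> (\<And>c'. c' \<in> T \<Longrightarrow> c \<subset> c' \<Longrightarrow> c' \<subset> \<nu> \<Longrightarrow> False)
    \<Longrightarrow> c \<in> children T \<nu>"
  unfolding children_def by blast

lemma card_child_less: "\<nu> \<in> T \<Longrightarrow> c \<in> children T \<nu> \<Longrightarrow> card c < card \<nu>"
  by (meson child_psubset finite_node psubset_card_mono)

lemma finite_children: "finite (children T \<nu>)"
proof -
  have "children T \<nu> \<subseteq> T"
    using child_in_T by blast
  then show ?thesis
    using finite_T by (rule finite_subset)
qed

lemma children_disjoint: "pairwise disjnt (children T \<nu>)"
proof (rule pairwiseI)
  fix c1 c2 assume c: "c1 \<in> children T \<nu>" "c2 \<in> children T \<nu>" "c1 \<noteq> c2"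
  then have "\<not> c1 \<subset> c2" "\<not> c2 \<subset> c1"
    using child_maximal child_in_T child_psubset by meson+
  with c show "disjnt c1 c2"
    using laminar [OF child_in_T [OF c(1)] child_in_T [OF c(2)]] unfolding disjnt_def by blast
qed

lemma exists_child_above:
  assumes "\<mu> \<in> T" "\<mu> \<subset> \<nu>"
  obtains c where "c \<in> children T \<nu>" "\<mu> \<subseteq> c"
proof -
  let ?S = "{c\<in>T. \<mu> \<subseteq> c \<and> c \<subset> \<nu>}"
  have "finite ?S" "?S \<noteq> {}"
    using finite_T assms by auto
  then obtain c where c: "c \<in> ?S" "\<forall>b\<in>?S. c \<subseteq> b \<longrightarrow> c = b"
    by (meson finite_has_maximal)
  then have "c \<in> children T \<nu>"
    by (intro childI) auto
  with c that show ?thesis by blast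
qed

lemma interior_in_T: "\<nu> \<in> interior T \<Longrightarrow> \<nu> \<in> T"
  unfolding interior_def by blast

lemma interior_iff_card: "\<nu> \<in> T \<Longrightarrow> \<nu> \<in> interior T \<longleftrightarrow> 2 \<le> card \<nu>"
proof
  assume "\<nu> \<in> T" "\<nu> \<in> interior T"
  then obtain c where c: "c \<in> children T \<nu>"
    unfolding interior_def by blast
  show "2 \<le> card \<nu>"
    using card_child_less [OF \<open>\<nu> \<in> T\<close> c] card_node_pos [OF child_in_T [OF c]] by linarith
next
  assume \<nu>: "\<nu> \<in> T" "2 \<le> card \<nu>"
  then obtain n where "n \<in> \<nu>"
    by (metis all_not_in_conv card.empty not_numeral_le_zero)
  moreover have "n \<in> {1..N}"
    using node_subset [OF \<nu>(1)] \<open>n \<in> \<nu>\<close> by blast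
  ultimately have "{n} \<in> T" "{n} \<subset> \<nu>"
    using \<nu> singleton_in_T by auto
  then obtain c where "c \<in> children T \<nu>"
    by (rule exists_child_above)
  with \<nu> show "\<nu> \<in> interior T"
    unfolding interior_def by blast
qed

lemma Union_children: "\<nu> \<in> interior T \<Longrightarrow> \<Union>(children T \<nu>) = \<nu>"
proof (intro equalityI subsetI)
  fix n assume \<nu>: "\<nu> \<in> interior T" and "n \<in> \<nu>"
  then have "n \<in> {1..N}"
    using node_subset [OF interior_in_T [OF \<nu>]] by blast
  moreover have "2 \<le> card \<nu>"
    using \<nu> interior_in_T interior_iff_card by blast
  ultimately have "{n} \<in> T" "{n} \<subset> \<nu>"
    using singleton_in_T \<open>n \<in> \<nu>\<close> by auto
  then obtain c where "c \<in> children T \<nu>" "{n} \<subseteq> c"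
    by (rule exists_child_above)
  then show "n \<in> \<Union>(children T \<nu>)" by blast
qed (use child_psubset in blast)

lemma leaf_singleton:
  assumes "\<nu> \<in> T" "\<nu> \<notin> interior T"
  obtains n where "n \<in> {1..N}" "\<nu> = {n}"
proof -
  have "\<not> 2 \<le> card \<nu>" "0 < card \<nu>"
    using assms interior_iff_card card_node_pos by blast+
  then have "card \<nu> = 1"
    by linarith
  then obtain n where "\<nu> = {n}"
    by (rule card_1_singletonE)
  with assms(1) that show ?thesis
    using node_subset by blast
qed

lemma node_induct [consumes 1, case_names singleton interior]:
  assumes "\<nu> \<in> T"
    and "\<And>n. n \<in> {1..N} \<Longrightarrow> P {n}"
    and "\<And>\<nu>. \<nu> \<in> interior T \<Longrightarrow> (\<And>c. c \<in> children T \<nu> \<Longrightarrow> P c) \<Longrightarrow> P \<nu>"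
  shows "P \<nu>"
  using assms(1)
proof (induction "card \<nu>" arbitrary: \<nu> rule: less_induct)
  case less
  show ?case
  proof (cases "\<nu> \<in> interior T")
    case True
    then show ?thesis
      using less card_child_less child_in_T assms(3) by blast
  next
    case False
    with less.prems obtain n where "n \<in> {1..N}" "\<nu> = {n}"
      by (rule leaf_singleton)
    with assms(2) show ?thesis by blast
  qed
qed

lemma singleton_not_interior: "{n} \<notin> interior T"
  using interior_iff_card interior_in_T by fastforce

lemma parent_eqI:
  assumes "\<nu> \<in> T" "c \<in> children T \<nu>"
  shows "parent T c = \<nu>"
  unfolding parent_def
proof (rule the_equality)
  fix p assume p: "p \<in> T \<and> c \<in> children T p"
  then have cp: "c \<subset> p"
    using child_psubset by blast
  have cn: "c \<subset> \<nu>" "c \<noteq> {}"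
    using assms(2) child_psubset child_in_T node_nonempty by blast+
  have "\<not> p \<subset> \<nu>"
    using child_maximal [OF assms(2) _ cp] p by blast
  moreover have "\<not> \<nu> \<subset> p"
    using child_maximal [of c p \<nu>] p assms(1) cn by blast
  moreover have "p \<inter> \<nu> \<noteq> {}"
    using cp cn by blast
  ultimately show "p = \<nu>"
    using laminar [of p \<nu>] p assms(1) by blast
qed (use assms in blast)

definition subtree :: "nat set \<Rightarrow> nat set set" where
  "subtree \<nu> = {\<mu>\<in>T. \<mu> \<subseteq> \<nu>}"

lemma finite_subtree: "finite (subtree \<nu>)"
  unfolding subtree_def using finite_T by simp

lemma self_in_subtree: "\<nu> \<in> T \<Longrightarrow> \<nu> \<in> subtree \<nu>"
  unfolding subtree_def by simp

lemma subtree_subset_T: "subtree \<nu> \<subseteq> T"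
  unfolding subtree_def by blast

lemma subtree_root: "subtree {1..N} = T"
  unfolding subtree_def using node_subset by blast

lemma subtree_singleton: "{n} \<in> T \<Longrightarrow> subtree {n} = {{n}}"
  unfolding subtree_def using node_nonempty by (auto simp: subset_singleton_iff)

lemma subtree_mono: "\<mu> \<in> subtree \<nu> \<Longrightarrow> subtree \<mu> \<subseteq> subtree \<nu>"
  unfolding subtree_def by blast

lemma subtree_interior:
  assumes "\<nu> \<in> interior T"
  shows "subtree \<nu> = insert \<nu> (\<Union>c\<in>children T \<nu>. subtree c)"
proof (rule equalityI)
  show "subtree \<nu> \<subseteq> insert \<nu> (\<Union>c\<in>children T \<nu>. subtree c)"
  proof
    fix \<mu> assume "\<mu> \<in> subtree \<nu>"
    then have \<mu>: "\<mu> \<in> T" "\<mu> \<subseteq> \<nu>"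
      unfolding subtree_def by auto
    show "\<mu> \<in> insert \<nu> (\<Union>c\<in>children T \<nu>. subtree c)"
    proof (cases "\<mu> = \<nu>")
      case False
      with \<mu> obtain c where "c \<in> children T \<nu>" "\<mu> \<subseteq> c"
        by (metis exists_child_above psubsetI)
      with \<mu> show ?thesis
        unfolding subtree_def by auto
    qed simp
  qed
  show "insert \<nu> (\<Union>c\<in>children T \<nu>. subtree c) \<subseteq> subtree \<nu>"
    using assms interior_in_T unfolding subtree_def by (auto dest: child_psubset)
qed

lemma subtree_children_disjoint:
  assumes "c1 \<in> children T \<nu>" "c2 \<in> children T \<nu>" "c1 \<noteq> c2"
  shows "subtree c1 \<inter> subtree c2 = {}"
proof -
  have "c1 \<inter> c2 = {}"
    using children_disjoint [of \<nu>] assms unfolding pairwise_def disjnt_def by blast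
  then have "\<mu> \<notin> T" if "\<mu> \<subseteq> c1" "\<mu> \<subseteq> c2" for \<mu>
    using that node_nonempty by blast
  then show ?thesis
    unfolding subtree_def by blast
qed

lemma not_in_subtree_child: "c \<in> children T \<nu> \<Longrightarrow> \<nu> \<notin> subtree c"
  unfolding subtree_def using child_psubset by blast

lemma card_subtree_interior:
  assumes "\<nu> \<in> interior T"
  shows "card (subtree \<nu>) = 1 + (\<Sum>c\<in>children T \<nu>. card (subtree c))"
proof -
  have "card (subtree \<nu>) = 1 + card (\<Union>c\<in>children T \<nu>. subtree c)"
    unfolding subtree_interior [OF assms]
    using not_in_subtree_child finite_subtree finite_children by (subst card_insert_disjoint) auto
  also have "card (\<Union>c\<in>children T \<nu>. subtree c) = (\<Sum>c\<in>children T \<nu>. card (subtree c))"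
    using subtree_children_disjoint finite_subtree finite_children by (intro card_UN_disjoint) auto
  finally show ?thesis .
qed

lemma card_subtree_pos: "\<nu> \<in> T \<Longrightarrow> 0 < card (subtree \<nu>)"
  using self_in_subtree finite_subtree card_gt_0_iff by blast

lemma card_children_less_card_subtree:
  assumes "\<nu> \<in> interior T"
  shows "card (children T \<nu>) < card (subtree \<nu>)"
proof -
  have "card (children T \<nu>) \<le> (\<Sum>c\<in>children T \<nu>. card (subtree c))"
    using card_subtree_pos child_in_T
    by (metis One_nat_def Suc_leI card_eq_sum sum_mono)
  then show ?thesis
    using card_subtree_interior [OF assms] by linarith
qed

lemma card_subtree_child_less:
  assumes "\<nu> \<in> interior T" "c \<in> children T \<nu>"
  shows "card (subtree c) < card (subtree \<nu>)"
proof -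
  have "card (subtree c) \<le> (\<Sum>c'\<in>children T \<nu>. card (subtree c'))"
    using assms(2) finite_children by (intro member_le_sum) auto
  then show ?thesis
    using card_subtree_interior [OF assms(1)] by linarith
qed

lemma card_subtree_children_diff:
  assumes "\<nu> \<in> interior T"
  shows "(\<Sum>c\<in>children T \<nu>. card (subtree c) - 1) = card (subtree \<nu>) - 1 - card (children T \<nu>)"
proof -
  have "(\<Sum>c\<in>children T \<nu>. card (subtree c) - 1) = (\<Sum>c\<in>children T \<nu>. card (subtree c)) - card (children T \<nu>)"
    using card_subtree_pos child_in_T by (subst sum_subtractf_nat) (auto simp: Suc_le_eq)
  then show ?thesis
    using card_subtree_interior [OF assms] by simp
qed

lemma interior_subtree_interior:
  assumes "\<nu> \<in> interior T"
  shows "interior T \<inter> subtree \<nu> = insert \<nu> (\<Union>c\<in>children T \<nu>. interior T \<inter> subtree c)"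
  using subtree_interior [OF assms] assms by blast

lemma card_interior: "card (interior T) = card T - N"
proof -
  have "interior T = T - (\<lambda>n. {n}) ` {1..N}"
    using interior_in_T singleton_not_interior leaf_singleton by blast
  moreover have "card ((\<lambda>n. {n}) ` {1..N}) = N"
    by (subst card_image) (auto simp: inj_on_def)
  moreover have "(\<lambda>n. {n}) ` {1..N} \<subseteq> T"
    using singleton_in_T by auto
  ultimately show ?thesis
    using finite_T by (simp add: card_Diff_subset)
qed

lemma comp_aux_enough_fuel:
  assumes "\<nu> \<in> T" "card \<nu> \<le> k"
  shows "comp_aux T D Q W k \<nu> r d = comp T D Q W \<nu> r d"
  using assms
proof (induction arbitrary: k r rule: node_induct)
  case (singleton n)
  then obtain k' where "k = Suc k'"
    by (cases k) auto
  then show ?case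
    unfolding comp_def by (simp add: singleton_not_interior)
next
  case (interior \<nu>)
  then obtain k' m where k: "k = Suc k'" and m: "card \<nu> = Suc m"
    using card_node_pos [OF interior_in_T] by (metis Suc_le_D gr0_implies_Suc)
  have "comp_aux T D Q W k' c r' d = comp_aux T D Q W m c r' d" if "c \<in> children T \<nu>" for c r'
    using interior.IH [OF that] that card_child_less [OF interior_in_T] interior k m
    by (metis Suc_le_mono less_Suc_eq_le order.strict_trans2)
  with interior k m show ?case
    unfolding comp_def by (simp cong: sum.cong prod.cong)
qed

lemma comp_interior:
  assumes "\<nu> \<in> interior T"
  shows "comp T D Q W \<nu> r d = (\<Sum>r'<Q \<nu>. W \<nu> r' r * (\<Prod>c\<in>children T \<nu>. comp T D Q W c r' d))"
proof -
  obtain m where m: "card \<nu> = Suc m"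
    using card_node_pos [OF interior_in_T [OF assms]] gr0_implies_Suc by blast
  have "comp_aux T D Q W m c r' d = comp T D Q W c r' d" if "c \<in> children T \<nu>" for c r'
    using that m card_child_less [OF interior_in_T [OF assms]] child_in_T
    by (intro comp_aux_enough_fuel) fastforce+
  with assms m show ?thesis
    unfolding comp_def [of _ _ _ _ \<nu>] by (simp cong: sum.cong prod.cong)
qed

lemma comp_singleton: "comp T D Q W {n} r d = W {n} (d n) r"
  unfolding comp_def by (simp add: singleton_not_interior)

lemma comp_depends_only_on: "\<nu> \<in> T \<Longrightarrow> depends_only_on \<nu> (comp T D Q W \<nu> r)"
proof (induction arbitrary: r rule: node_induct)
  case (singleton n)
  then show ?case
    by (auto intro!: depends_only_onI simp: comp_singleton)
next
  case (interior \<nu>)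
  then have prod: "depends_only_on \<nu> (\<lambda>d. \<Prod>c\<in>children T \<nu>. comp T D Q W c r' d)" for r'
    using depends_only_on_prod [of "children T \<nu>"] Union_children [OF interior.hyps] by metis
  have "depends_only_on \<nu> (\<lambda>d. \<Sum>r'<Q \<nu>. W \<nu> r' r * (\<Prod>c\<in>children T \<nu>. comp T D Q W c r' d))"
    by (intro depends_only_on_sum depends_only_on_compose [OF prod])
  moreover have "comp T D Q W \<nu> r = (\<lambda>d. \<Sum>r'<Q \<nu>. W \<nu> r' r * (\<Prod>c\<in>children T \<nu>. comp T D Q W c r' d))"
    using comp_interior [OF interior.hyps] by (rule ext)
  ultimately show ?case
    by simp
qed

lemma L2_set_children_prod:
  assumes "\<nu> \<in> interior T"
  shows "L2_set (\<lambda>d. \<Prod>c\<in>children T \<nu>. comp T D Q W c r d) (mode_box D \<nu>)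
    = (\<Prod>c\<in>children T \<nu>. L2_set (comp T D Q W c r) (mode_box D c))"
  using L2_set_mode_box_prod [OF finite_children children_disjoint, of \<nu> "\<lambda>c. comp T D Q W c r" D]
  by (simp add: Union_children [OF assms] comp_depends_only_on child_in_T)

end

section \<open>Rank of the matricizations of a truncated factorization\<close>

lemma rank_mat_sum_outer_le:
  fixes f :: "nat \<Rightarrow> nat \<Rightarrow> real"
  shows "vec_space.rank n (mat n nc (\<lambda>(i, j). \<Sum>r<K. f i r * g r j)) \<le> K"
proof (induction K)
  case 0
  have zero: "mat n nc (\<lambda>(i, j). \<Sum>r<0. f i r * g r j) = 0\<^sub>m n nc"
    by auto
  show ?case
    unfolding zero vec_space.rank_0I by simp
next
  case (Suc K)
  have "mat n nc (\<lambda>(i, j). \<Sum>r<Suc K. f i r * g r j)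
      = mat n nc (\<lambda>(i, j). \<Sum>r<K. f i r * g r j) + mat n nc (\<lambda>(i, j). f i K * g K j)"
    by (rule eq_matI) auto
  moreover have "vec_space.rank n (mat n nc (\<lambda>(i, j). f i K * g K j)) \<le> 1"
    by (rule vec_space.rank_le_1_product_entries [of _ n nc "\<lambda>i. f i K" "\<lambda>j. g K j"]) auto
  ultimately show ?case
    using vec_space.rank_subadditive [of "mat n nc (\<lambda>(i, j). \<Sum>r<K. f i r * g r j)" n nc
        "mat n nc (\<lambda>(i, j). f i K * g K j)"] Suc
    by auto
qed

context fixed_mode_tree
begin

lemma depends_only_on_siblings:
  assumes "c0 \<in> children T \<mu>" "\<nu> \<subseteq> c0"
  shows "depends_only_on (- \<nu>) (\<lambda>d. \<Prod>c\<in>children T \<mu> - {c0}. comp T D Q W c r d)"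
proof -
  have "\<Union>(children T \<mu> - {c0}) \<subseteq> - \<nu>"
    using children_disjoint [of \<mu>] assms unfolding pairwise_def disjnt_def by blast
  then show ?thesis
    by (rule depends_only_on_mono, intro depends_only_on_prod) (metis DiffD1 child_in_T comp_depends_only_on)
qed

lemma comp_interior_child:
  assumes "\<nu> \<in> interior T" "c \<in> children T \<nu>"
  shows "comp T D Q W \<nu> r d = (\<Sum>r'<Q \<nu>. comp T D Q W c r' d *
    (W \<nu> r' r * (\<Prod>c'\<in>children T \<nu> - {c}. comp T D Q W c' r' d)))"
  unfolding comp_interior [OF assms(1)] prod.remove [OF finite_children assms(2)] by (simp add: algebra_simps)

lemma comp_factor_through_node:
  assumes "\<nu> \<in> T" "\<mu> \<in> T" "\<nu> \<subset> \<mu>"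
  shows "\<exists>G. (\<forall>r d. comp T D Q W \<mu> r d = (\<Sum>s<Q (parent T \<nu>). comp T D Q W \<nu> s d * G r s d))
    \<and> (\<forall>r s. depends_only_on (- \<nu>) (G r s))"
  using assms(2,3)
proof (induction rule: node_induct)
  case (singleton n)
  then show ?case
    using node_nonempty [OF assms(1)] by (auto simp: subset_singleton_iff)
next
  case (interior \<mu>)
  obtain c0 where c0: "c0 \<in> children T \<mu>" "\<nu> \<subseteq> c0"
    using exists_child_above [OF assms(1) interior.prems] .
  let ?H = "\<lambda>r' r d. W \<mu> r' r * (\<Prod>c\<in>children T \<mu> - {c0}. comp T D Q W c r' d)"
  have H: "depends_only_on (- \<nu>) (?H r' r)" for r' r
    by (rule depends_only_on_compose [OF depends_only_on_siblings [OF c0]])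
  show ?case
  proof (cases "\<nu> = c0")
    case True
    then have "parent T \<nu> = \<mu>"
      using parent_eqI [OF interior_in_T [OF interior.hyps] c0(1)] by simp
    with True show ?thesis
      using comp_interior_child [OF interior.hyps c0(1)] H by (intro exI [of _ "\<lambda>r s. ?H s r"]) simp
  next
    case False
    then obtain G0 where G0: "\<And>r d. comp T D Q W c0 r d = (\<Sum>s<Q (parent T \<nu>). comp T D Q W \<nu> s d * G0 r s d)"
        "\<And>r s. depends_only_on (- \<nu>) (G0 r s)"
      using interior.IH [OF c0(1)] c0(2) by blast
    let ?G = "\<lambda>r s d. \<Sum>r'<Q \<mu>. G0 r' s d * ?H r' r d"
    have "comp T D Q W \<mu> r d = (\<Sum>s<Q (parent T \<nu>). comp T D Q W \<nu> s d * ?G r s d)" for r d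
      unfolding comp_interior_child [OF interior.hyps c0(1)] G0
      by (simp add: sum_distrib_left sum_distrib_right algebra_simps sum.swap [of _ "{..<Q \<mu>}"])
    moreover have "depends_only_on (- \<nu>) (?G r s)" for r s
      by (intro depends_only_on_sum depends_only_on_compose2 [where h = "(*)", OF G0(2) H])
    ultimately show ?thesis
      by (intro exI [of _ ?G]) blast
  qed
qed

lemma mrank_matricize_comp_le:
  assumes "\<nu> \<in> T" "\<nu> \<noteq> {1..N}"
  shows "mrank (matricize N D (\<lambda>d. comp T D Q W {1..N} 0 d) \<nu>) \<le> Q (parent T \<nu>)"
proof -
  have "\<nu> \<subset> {1..N}"
    using assms node_subset by blast
  then obtain G where G: "\<And>r d. comp T D Q W {1..N} r d = (\<Sum>s<Q (parent T \<nu>). comp T D Q W \<nu> s d * G r s d)"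
      "\<And>r s. depends_only_on (- \<nu>) (G r s)"
    using comp_factor_through_node [OF assms(1) root_in_T] by blast
  let ?f = "\<lambda>p s. comp T D Q W \<nu> s (decode N D \<nu> p 0)"
  let ?g = "\<lambda>s q. G 0 s (decode N D \<nu> 0 q)"
  have "comp T D Q W {1..N} 0 (decode N D \<nu> p q) = (\<Sum>s<Q (parent T \<nu>). ?f p s * ?g s q)" for p q
  proof -
    have "comp T D Q W \<nu> s (decode N D \<nu> p q) = ?f p s" for s
      using comp_depends_only_on [OF assms(1)] by (rule depends_only_onD) (simp add: decode_def)
    moreover have "G 0 s (decode N D \<nu> p q) = ?g s q" for s
      using G(2) by (rule depends_only_onD) (simp add: decode_def)
    ultimately show ?thesis
      using G(1) by simp
  qed
  then have "matricize N D (\<lambda>d. comp T D Q W {1..N} 0 d) \<nu>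
      = mat (\<Prod>i\<in>\<nu>. D i) (\<Prod>j\<in>{1..N} - \<nu>. D j) (\<lambda>(p, q). \<Sum>s<Q (parent T \<nu>). ?f p s * ?g s q)"
    unfolding matricize_def by simp
  then show ?thesis
    unfolding mrank_def using rank_mat_sum_outer_le by simp
qed

lemma comp_root_mem_rank_constrained:
  assumes "\<And>\<mu>. Q \<mu> \<le> R' \<mu>"
  shows "(\<lambda>d. comp T D Q W {1..N} 0 d) \<in> {X. \<forall>\<nu>\<in>T - {{1..N}}. mrank (matricize N D X \<nu>) \<le> R' (parent T \<nu>)}"
  using mrank_matricize_comp_le assms by (blast intro: order_trans)
end

section \<open>Norm bounds and truncation error\<close>

lemma mult_power_le_of_le_power_int:
  fixes B c x :: real
  assumes "0 \<le> c" "0 \<le> B" "x \<le> c * B powi (- int e)"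
  shows "x * B ^ e \<le> c"
proof (cases "B ^ e = 0")
  case False
  have "x * B ^ e \<le> c * inverse (B ^ e) * B ^ e"
    using assms(2,3) by (intro mult_right_mono) (auto simp: power_int_minus)
  also have "c * inverse (B ^ e) * B ^ e = c"
    using False by (simp add: mult.assoc)
  finally show ?thesis .
qed (metis assms(1) mult_zero_right)

locale bounded_factorization = fixed_mode_tree +
  fixes D :: "nat \<Rightarrow> nat" and R :: "nat set \<Rightarrow> nat" and W :: "nat set \<Rightarrow> nat \<Rightarrow> nat \<Rightarrow> real"
    and B :: real
  assumes wnorm_le: "\<nu> \<in> T \<Longrightarrow> wnorm N T D R W \<nu> \<le> B"
begin

lemma B_nonneg: "0 \<le> B"
  using wnorm_le [OF root_in_T] unfolding wnorm_def by (meson order_trans real_sqrt_ge_zero sum_nonneg zero_le_power2)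

lemma rk_interior: "\<nu> \<in> interior T \<Longrightarrow> rk T D R \<nu> = R \<nu>"
  unfolding rk_def by simp

lemma rk_singleton: "rk T D R {n} = D n"
  unfolding rk_def by (simp add: singleton_not_interior)

lemma prk_child:
  assumes "\<nu> \<in> interior T" "c \<in> children T \<nu>"
  shows "prk N T D R c = R \<nu>"
proof -
  have "c \<noteq> {1..N}"
    using child_psubset [OF assms(2)] node_subset [OF interior_in_T [OF assms(1)]] by blast
  then show ?thesis
    unfolding prk_def using parent_eqI [OF interior_in_T [OF assms(1)] assms(2)] rk_interior [OF assms(1)] by simp
qed

lemma colnorm_eq_L2_set: "colnorm N T D R W \<nu> r = L2_set (\<lambda>i. W \<nu> i r) {..<rk T D R \<nu>}"
  unfolding colnorm_def L2_set_def ..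

lemma rownorm_eq_L2_set: "rownorm N T D R W \<nu> r = L2_set (W \<nu> r) {..<prk N T D R \<nu>}"
  unfolding rownorm_def L2_set_def ..

lemma wnorm_eq_L2_set:
  "wnorm N T D R W \<nu> = L2_set (\<lambda>(i, j). W \<nu> i j) ({..<rk T D R \<nu>} \<times> {..<prk N T D R \<nu>})"
  unfolding wnorm_def L2_set_def by (simp add: sum.cartesian_product split_def)

lemma wnorm_eq_L2_set_colnorm: "wnorm N T D R W \<nu> = L2_set (colnorm N T D R W \<nu>) {..<prk N T D R \<nu>}"
  unfolding wnorm_eq_L2_set L2_set_Times_swap colnorm_eq_L2_set ..

lemma family_norm_le_of_colnorm_le:
  assumes "\<nu> \<in> T" "0 < s"
    and "\<And>r. L2_set (F r) A \<le> colnorm N T D R W \<nu> r * B ^ (s - 1)"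
  shows "L2_set (\<lambda>(r, d). F r d) ({..<prk N T D R \<nu>} \<times> A) \<le> B ^ s"
proof -
  have "L2_set (\<lambda>(r, d). F r d) ({..<prk N T D R \<nu>} \<times> A)
      \<le> L2_set (\<lambda>r. colnorm N T D R W \<nu> r * B ^ (s - 1)) {..<prk N T D R \<nu>}"
    unfolding L2_set_Times using assms(3) by (intro L2_set_mono) auto
  also have "\<dots> = wnorm N T D R W \<nu> * B ^ (s - 1)"
    by (simp add: wnorm_eq_L2_set_colnorm L2_set_left_distrib B_nonneg)
  also have "\<dots> \<le> B * B ^ (s - 1)"
    using wnorm_le [OF assms(1)] B_nonneg by (simp add: mult_right_mono)
  finally show ?thesis
    using assms(2) by (simp add: power_eq_if split: if_splits)
qed

lemma L2_set_children_family_prod_le: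
  assumes "\<nu> \<in> interior T"
    and "\<And>c. c \<in> children T \<nu> \<Longrightarrow>
      L2_set (\<lambda>(r, d). comp T D Q W c r d) ({..<R \<nu>} \<times> mode_box D c) \<le> B ^ card (subtree c)"
  shows "L2_set (\<lambda>(r, d). \<Prod>c\<in>children T \<nu>. comp T D Q W c r d) ({..<R \<nu>} \<times> mode_box D \<nu>)
    \<le> B ^ (card (subtree \<nu>) - 1)"
proof -
  have "children T \<nu> \<noteq> {}"
    using assms(1) unfolding interior_def by blast
  then have "L2_set (\<lambda>(r, d). \<Prod>c\<in>children T \<nu>. comp T D Q W c r d) ({..<R \<nu>} \<times> mode_box D \<nu>)
      \<le> (\<Prod>c\<in>children T \<nu>. L2_set (\<lambda>r. L2_set (comp T D Q W c r) (mode_box D c)) {..<R \<nu>})"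
    unfolding L2_set_Times L2_set_children_prod [OF assms(1)]
    using finite_children by (intro L2_set_prod_le) auto
  also have "\<dots> \<le> (\<Prod>c\<in>children T \<nu>. B ^ card (subtree c))"
    using assms(2) by (intro prod_mono) (simp add: L2_set_Times)
  also have "\<dots> = B ^ (card (subtree \<nu>) - 1)"
    using card_subtree_interior [OF assms(1)] by (simp add: power_sum)
  finally show ?thesis .
qed

lemma norm_comp_le_colnorm:
  assumes "\<forall>\<mu>\<in>interior T. Q \<mu> \<le> R \<mu>" "\<nu> \<in> T"
  shows "L2_set (comp T D Q W \<nu> r) (mode_box D \<nu>) \<le> colnorm N T D R W \<nu> r * B ^ (card (subtree \<nu>) - 1)"
  using assms(2)
proof (induction arbitrary: r rule: node_induct)
  case (singleton n)
  then show ?case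
    using L2_set_mode_box_singleton [of "\<lambda>k. W {n} k r" n D]
    by (simp add: comp_singleton colnorm_eq_L2_set rk_singleton subtree_singleton singleton_in_T)
next
  case (interior \<nu>)
  let ?P = "\<lambda>r' d. \<Prod>c\<in>children T \<nu>. comp T D Q W c r' d"
  have QR: "Q \<nu> \<le> R \<nu>"
    using assms(1) interior.hyps by blast
  have children: "L2_set (\<lambda>(r', d). comp T D Q W c r' d) ({..<R \<nu>} \<times> mode_box D c) \<le> B ^ card (subtree c)"
    if "c \<in> children T \<nu>" for c
    using family_norm_le_of_colnorm_le [OF child_in_T [OF that] card_subtree_pos [OF child_in_T [OF that]]
        interior.IH [OF that]] prk_child [OF interior.hyps that] by simp
  have "L2_set (comp T D Q W \<nu> r) (mode_box D \<nu>) = L2_set (\<lambda>d. \<Sum>r'<Q \<nu>. W \<nu> r' r * ?P r' d) (mode_box D \<nu>)"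
    by (rule L2_set_cong) (simp_all add: comp_interior interior.hyps)
  also have "\<dots> \<le> L2_set (\<lambda>r'. W \<nu> r' r) {..<Q \<nu>} * L2_set (\<lambda>(r', d). ?P r' d) ({..<Q \<nu>} \<times> mode_box D \<nu>)"
    by (rule L2_set_sum_mult_le)
  also have "\<dots> \<le> colnorm N T D R W \<nu> r * B ^ (card (subtree \<nu>) - 1)"
  proof (rule mult_mono)
    show "L2_set (\<lambda>r'. W \<nu> r' r) {..<Q \<nu>} \<le> colnorm N T D R W \<nu> r"
      using QR by (simp add: colnorm_eq_L2_set rk_interior interior.hyps L2_set_subset_le)
    have "L2_set (\<lambda>(r', d). ?P r' d) ({..<Q \<nu>} \<times> mode_box D \<nu>)
        \<le> L2_set (\<lambda>(r', d). ?P r' d) ({..<R \<nu>} \<times> mode_box D \<nu>)"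
      using QR interior.hyps by (intro L2_set_subset_le) (auto simp: finite_mode_box finite_node interior_in_T)
    also have "\<dots> \<le> B ^ (card (subtree \<nu>) - 1)"
      using interior.hyps children by (rule L2_set_children_family_prod_le)
    finally show "L2_set (\<lambda>(r', d). ?P r' d) ({..<Q \<nu>} \<times> mode_box D \<nu>) \<le> B ^ (card (subtree \<nu>) - 1)" .
  qed (auto simp: colnorm_eq_L2_set)
  finally show ?case .
qed

lemma norm_comp_family_le:
  assumes "\<forall>\<mu>\<in>interior T. Q \<mu> \<le> R \<mu>" "\<nu> \<in> T"
  shows "L2_set (\<lambda>(r, d). comp T D Q W \<nu> r d) ({..<prk N T D R \<nu>} \<times> mode_box D \<nu>) \<le> B ^ card (subtree \<nu>)"
  using family_norm_le_of_colnorm_le [OF assms(2) card_subtree_pos [OF assms(2)] norm_comp_le_colnorm [OF assms]] .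

lemma norm_comp_le:
  assumes "\<forall>\<mu>\<in>interior T. Q \<mu> \<le> R \<mu>" "\<nu> \<in> T" "r < prk N T D R \<nu>"
  shows "L2_set (comp T D Q W \<nu> r) (mode_box D \<nu>) \<le> B ^ card (subtree \<nu>)"
  using member_le_L2_set [of "{..<prk N T D R \<nu>}" r "\<lambda>r. L2_set (comp T D Q W \<nu> r) (mode_box D \<nu>)"]
    norm_comp_family_le [OF assms(1,2)] assms(3)
  unfolding L2_set_Times by simp

lemma power_card_subtree_siblings:
  assumes "\<nu> \<in> interior T" "c \<in> children T \<nu>"
  shows "B * (\<Prod>c'\<in>children T \<nu> - {c}. B ^ card (subtree c')) = B ^ (card (subtree \<nu>) - card (subtree c))"
proof -
  have "card (subtree \<nu>) = 1 + card (subtree c) + (\<Sum>c'\<in>children T \<nu> - {c}. card (subtree c'))"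
    using card_subtree_interior [OF assms(1)] sum.remove [OF finite_children assms(2)] by simp
  then show ?thesis
    by (simp add: power_sum)
qed

lemma norm_children_prod_le_colnorm:
  assumes "\<nu> \<in> interior T"
  shows "L2_set (\<lambda>d. \<Prod>c\<in>children T \<nu>. comp T D R W c r d) (mode_box D \<nu>)
    \<le> (\<Prod>c\<in>children T \<nu>. colnorm N T D R W c r) * B ^ (card (subtree \<nu>) - 1 - card (children T \<nu>))"
proof -
  have "L2_set (\<lambda>d. \<Prod>c\<in>children T \<nu>. comp T D R W c r d) (mode_box D \<nu>)
      \<le> (\<Prod>c\<in>children T \<nu>. colnorm N T D R W c r * B ^ (card (subtree c) - 1))"
    unfolding L2_set_children_prod [OF assms]
    using norm_comp_le_colnorm [of R] child_in_T by (intro prod_mono) auto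
  also have "\<dots> = (\<Prod>c\<in>children T \<nu>. colnorm N T D R W c r) * B ^ (card (subtree \<nu>) - 1 - card (children T \<nu>))"
    unfolding prod.distrib power_sum [symmetric] card_subtree_children_diff [OF assms] ..
  finally show ?thesis .
qed

definition trunc_error :: "(nat set \<Rightarrow> nat) \<Rightarrow> nat set \<Rightarrow> real" where
  "trunc_error Q \<nu> = L2_set (\<lambda>(r, d). comp T D R W \<nu> r d - comp T D Q W \<nu> r d)
     ({..<prk N T D R \<nu>} \<times> mode_box D \<nu>)"

definition tail_sum :: "(nat set \<Rightarrow> nat) \<Rightarrow> nat set \<Rightarrow> real" where
  "tail_sum Q \<mu> = (\<Sum>r\<in>{Q \<mu>..<R \<mu>}. sigma N T D R W \<mu> r)"

lemma tail_sum_min: "tail_sum (\<lambda>\<nu>. min (R \<nu>) (R' \<nu>)) \<nu> = (\<Sum>r\<in>{R' \<nu>..<R \<nu>}. sigma N T D R W \<nu> r)"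
proof -
  have "{min (R \<nu>) (R' \<nu>)..<R \<nu>} = {R' \<nu>..<R \<nu>}"
    by auto
  then show ?thesis
    unfolding tail_sum_def by simp
qed

lemma comp_diff_interior:
  assumes "\<nu> \<in> interior T" "Q \<nu> \<le> R \<nu>"
  shows "comp T D R W \<nu> r d - comp T D Q W \<nu> r d =
    (\<Sum>r'\<in>{Q \<nu>..<R \<nu>}. W \<nu> r' r * (\<Prod>c\<in>children T \<nu>. comp T D R W c r' d)) +
    (\<Sum>r'<Q \<nu>. W \<nu> r' r *
       ((\<Prod>c\<in>children T \<nu>. comp T D R W c r' d) - (\<Prod>c\<in>children T \<nu>. comp T D Q W c r' d)))"
proof -
  have "(\<Sum>r'<R \<nu>. f r') = (\<Sum>r'<Q \<nu>. f r') + (\<Sum>r'\<in>{Q \<nu>..<R \<nu>}. f r')" for f :: "nat \<Rightarrow> real"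
    using sum.atLeastLessThan_concat [of 0 "Q \<nu>" "R \<nu>" f] assms(2) by (simp add: lessThan_atLeast0)
  then show ?thesis
    unfolding comp_interior [OF assms(1)] by (simp add: sum_subtractf right_diff_distrib)
qed

lemma tail_part_norm_le:
  assumes "\<nu> \<in> interior T"
  shows "L2_set (\<lambda>(r, d). \<Sum>r'\<in>{Q \<nu>..<R \<nu>}. W \<nu> r' r * (\<Prod>c\<in>children T \<nu>. comp T D R W c r' d))
      ({..<prk N T D R \<nu>} \<times> mode_box D \<nu>)
    \<le> tail_sum Q \<nu> * B ^ (card (subtree \<nu>) - 1 - card (children T \<nu>))"
proof -
  let ?A = "{..<prk N T D R \<nu>} \<times> mode_box D \<nu>"
  let ?e = "card (subtree \<nu>) - 1 - card (children T \<nu>)"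
  let ?P = "\<lambda>r' d. \<Prod>c\<in>children T \<nu>. comp T D R W c r' d"
  have "L2_set (\<lambda>(r, d). W \<nu> r' r * ?P r' d) ?A = rownorm N T D R W \<nu> r' * L2_set (?P r') (mode_box D \<nu>)" for r'
    by (simp add: L2_set_Times_mult rownorm_eq_L2_set)
  also have "\<dots> r' \<le> sigma N T D R W \<nu> r' * B ^ ?e" for r'
    using norm_children_prod_le_colnorm [OF assms, of r']
    by (simp add: sigma_def mult.assoc mult_left_mono rownorm_eq_L2_set)
  finally have each: "L2_set (\<lambda>(r, d). W \<nu> r' r * ?P r' d) ?A \<le> sigma N T D R W \<nu> r' * B ^ ?e" for r' .
  have "L2_set (\<lambda>(r, d). \<Sum>r'\<in>{Q \<nu>..<R \<nu>}. W \<nu> r' r * ?P r' d) ?A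
      \<le> (\<Sum>r'\<in>{Q \<nu>..<R \<nu>}. L2_set (\<lambda>(r, d). W \<nu> r' r * ?P r' d) ?A)"
    using L2_set_sum_le [of "{Q \<nu>..<R \<nu>}" "\<lambda>r' (r, d). W \<nu> r' r * ?P r' d" ?A]
    by (simp add: split_def)
  also have "\<dots> \<le> tail_sum Q \<nu> * B ^ ?e"
    unfolding tail_sum_def sum_distrib_right by (intro sum_mono each)
  finally show ?thesis .
qed

lemma children_prod_diff_norm_le:
  assumes "\<forall>\<mu>\<in>interior T. Q \<mu> \<le> R \<mu>" "\<nu> \<in> interior T"
  shows "L2_set (\<lambda>(r, d). (\<Prod>c\<in>children T \<nu>. comp T D R W c r d) - (\<Prod>c\<in>children T \<nu>. comp T D Q W c r d))
      ({..<R \<nu>} \<times> mode_box D \<nu>)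
    \<le> (\<Sum>c\<in>children T \<nu>. trunc_error Q c * (\<Prod>c'\<in>children T \<nu> - {c}. B ^ card (subtree c')))"
proof -
  have RR: "\<forall>\<mu>\<in>interior T. R \<mu> \<le> R \<mu>"
    by simp
  have "trunc_error Q c = L2_set (\<lambda>(r, d). comp T D R W c r d - comp T D Q W c r d) ({..<R \<nu>} \<times> mode_box D c)"
    if "c \<in> children T \<nu>" for c
    unfolding trunc_error_def prk_child [OF assms(2) that] ..
  moreover have "L2_set (comp T D X W c r) (mode_box D c) \<le> B ^ card (subtree c)"
    if "c \<in> children T \<nu>" "r \<in> {..<R \<nu>}" "\<forall>\<mu>\<in>interior T. X \<mu> \<le> R \<mu>" for c r X
    using norm_comp_le [OF that(3) child_in_T [OF that(1)]] that prk_child [OF assms(2) that(1)] by simp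
  ultimately show ?thesis
    using L2_set_prod_diff_le [OF finite_children children_disjoint, of \<nu> "\<lambda>c. comp T D R W c"
        "\<lambda>c. comp T D Q W c" "\<lambda>c. B ^ card (subtree c)" "{..<R \<nu>}" D]
      comp_depends_only_on child_in_T B_nonneg assms(1) RR
    by (simp add: Union_children [OF assms(2)])
qed

lemma head_part_norm_le:
  assumes "\<forall>\<mu>\<in>interior T. Q \<mu> \<le> R \<mu>" "\<nu> \<in> interior T"
  shows "L2_set (\<lambda>(r, d). \<Sum>r'<Q \<nu>. W \<nu> r' r *
        ((\<Prod>c\<in>children T \<nu>. comp T D R W c r' d) - (\<Prod>c\<in>children T \<nu>. comp T D Q W c r' d)))
      ({..<prk N T D R \<nu>} \<times> mode_box D \<nu>)
    \<le> (\<Sum>c\<in>children T \<nu>. trunc_error Q c * B ^ (card (subtree \<nu>) - card (subtree c)))"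
proof -
  let ?G = "\<lambda>r' d. (\<Prod>c\<in>children T \<nu>. comp T D R W c r' d) - (\<Prod>c\<in>children T \<nu>. comp T D Q W c r' d)"
  let ?I = "{..<prk N T D R \<nu>}"
  have QR: "Q \<nu> \<le> R \<nu>"
    using assms by blast
  have "L2_set (\<lambda>(r, d). \<Sum>r'<Q \<nu>. W \<nu> r' r * ?G r' d) (?I \<times> mode_box D \<nu>)
      \<le> L2_set (\<lambda>(r', r). W \<nu> r' r) ({..<Q \<nu>} \<times> ?I) * L2_set (\<lambda>(r', d). ?G r' d) ({..<Q \<nu>} \<times> mode_box D \<nu>)"
    by (rule L2_set_matrix_mult_le)
  also have "\<dots> \<le> B * L2_set (\<lambda>(r', d). ?G r' d) ({..<R \<nu>} \<times> mode_box D \<nu>)"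
  proof (rule mult_mono)
    have "L2_set (\<lambda>(r', r). W \<nu> r' r) ({..<Q \<nu>} \<times> ?I) \<le> wnorm N T D R W \<nu>"
      unfolding wnorm_eq_L2_set rk_interior [OF assms(2)] using QR by (intro L2_set_subset_le) auto
    then show "L2_set (\<lambda>(r', r). W \<nu> r' r) ({..<Q \<nu>} \<times> ?I) \<le> B"
      using wnorm_le [OF interior_in_T [OF assms(2)]] by linarith
    show "L2_set (\<lambda>(r', d). ?G r' d) ({..<Q \<nu>} \<times> mode_box D \<nu>) \<le> L2_set (\<lambda>(r', d). ?G r' d) ({..<R \<nu>} \<times> mode_box D \<nu>)"
      using QR assms(2) by (intro L2_set_subset_le) (auto simp: finite_mode_box finite_node interior_in_T)
  qed (auto simp: B_nonneg)
  also have "\<dots> \<le> B * (\<Sum>c\<in>children T \<nu>. trunc_error Q c * (\<Prod>c'\<in>children T \<nu> - {c}. B ^ card (subtree c')))"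
    using children_prod_diff_norm_le [OF assms] B_nonneg by (rule mult_left_mono)
  also have "\<dots> = (\<Sum>c\<in>children T \<nu>. trunc_error Q c * B ^ (card (subtree \<nu>) - card (subtree c)))"
    unfolding sum_distrib_left
    by (intro sum.cong refl) (simp add: power_card_subtree_siblings [OF assms(2), symmetric] algebra_simps)
  finally show ?thesis .
qed

definition trunc_error_bound :: "(nat set \<Rightarrow> nat) \<Rightarrow> nat set \<Rightarrow> real" where
  "trunc_error_bound Q \<nu> =
     (\<Sum>\<mu>\<in>interior T \<inter> subtree \<nu>. tail_sum Q \<mu> * B ^ (card (subtree \<nu>) - 1 - card (children T \<mu>)))"

lemma trunc_error_bound_interior:
  assumes "\<nu> \<in> interior T"
  shows "trunc_error_bound Q \<nu> = tail_sum Q \<nu> * B ^ (card (subtree \<nu>) - 1 - card (children T \<nu>))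
    + (\<Sum>c\<in>children T \<nu>. trunc_error_bound Q c * B ^ (card (subtree \<nu>) - card (subtree c)))"
proof -
  let ?f = "\<lambda>\<nu> \<mu>. tail_sum Q \<mu> * B ^ (card (subtree \<nu>) - 1 - card (children T \<mu>))"
  have shift: "?f \<nu> \<mu> = ?f c \<mu> * B ^ (card (subtree \<nu>) - card (subtree c))"
    if c: "c \<in> children T \<nu>" and \<mu>: "\<mu> \<in> interior T \<inter> subtree c" for c \<mu>
  proof -
    have "card (children T \<mu>) < card (subtree \<mu>)"
      using \<mu> card_children_less_card_subtree by blast
    moreover have "card (subtree \<mu>) \<le> card (subtree c)"
      using \<mu> subtree_mono finite_subtree by (intro card_mono) auto
    moreover have "card (subtree c) < card (subtree \<nu>)"
      using card_subtree_child_less [OF assms c] .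
    ultimately show ?thesis
      by (simp add: mult.assoc power_add [symmetric])
  qed
  have "trunc_error_bound Q \<nu> = ?f \<nu> \<nu> + (\<Sum>\<mu>\<in>(\<Union>c\<in>children T \<nu>. interior T \<inter> subtree c). ?f \<nu> \<mu>)"
    unfolding trunc_error_bound_def interior_subtree_interior [OF assms]
    using not_in_subtree_child finite_children finite_subtree by (subst sum.insert) auto
  also have "\<dots> = ?f \<nu> \<nu> + (\<Sum>c\<in>children T \<nu>. \<Sum>\<mu>\<in>interior T \<inter> subtree c. ?f \<nu> \<mu>)"
  proof -
    have "\<forall>c1\<in>children T \<nu>. \<forall>c2\<in>children T \<nu>. c1 \<noteq> c2 \<longrightarrow>
        (interior T \<inter> subtree c1) \<inter> (interior T \<inter> subtree c2) = {}"
      using subtree_children_disjoint by blast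
    then have "(\<Sum>\<mu>\<in>(\<Union>c\<in>children T \<nu>. interior T \<inter> subtree c). ?f \<nu> \<mu>)
        = (\<Sum>c\<in>children T \<nu>. \<Sum>\<mu>\<in>interior T \<inter> subtree c. ?f \<nu> \<mu>)"
      by (intro sum.UNION_disjoint finite_children) (auto simp: finite_subtree)
    then show ?thesis
      by (rule arg_cong)
  qed
  also have "\<dots> = ?f \<nu> \<nu> + (\<Sum>c\<in>children T \<nu>. trunc_error_bound Q c * B ^ (card (subtree \<nu>) - card (subtree c)))"
    unfolding trunc_error_bound_def sum_distrib_right by (intro arg_cong2 [where f = "(+)"] refl sum.cong shift)
  finally show ?thesis .
qed

lemma trunc_error_le:
  assumes "\<forall>\<mu>\<in>interior T. Q \<mu> \<le> R \<mu>" "\<nu> \<in> T"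
  shows "trunc_error Q \<nu> \<le> trunc_error_bound Q \<nu>"
  using assms(2)
proof (induction rule: node_induct)
  case (singleton n)
  have "interior T \<inter> subtree {n} = {}"
    using subtree_singleton [OF singleton_in_T [OF singleton]] singleton_not_interior by auto
  then show ?case
    unfolding trunc_error_def trunc_error_bound_def by (simp add: comp_singleton L2_set_def)
next
  case (interior \<nu>)
  let ?T1 = "\<lambda>(r, d). \<Sum>r'\<in>{Q \<nu>..<R \<nu>}. W \<nu> r' r * (\<Prod>c\<in>children T \<nu>. comp T D R W c r' d)"
  let ?T2 = "\<lambda>(r, d). \<Sum>r'<Q \<nu>. W \<nu> r' r *
    ((\<Prod>c\<in>children T \<nu>. comp T D R W c r' d) - (\<Prod>c\<in>children T \<nu>. comp T D Q W c r' d))"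
  let ?A = "{..<prk N T D R \<nu>} \<times> mode_box D \<nu>"
  have "trunc_error Q \<nu> = L2_set (\<lambda>p. ?T1 p + ?T2 p) ?A"
    unfolding trunc_error_def using assms(1) interior.hyps
    by (intro L2_set_cong) (auto simp: comp_diff_interior)
  also have "\<dots> \<le> L2_set ?T1 ?A + L2_set ?T2 ?A"
    by (rule L2_set_triangle_ineq)
  also have "\<dots> \<le> tail_sum Q \<nu> * B ^ (card (subtree \<nu>) - 1 - card (children T \<nu>))
      + (\<Sum>c\<in>children T \<nu>. trunc_error_bound Q c * B ^ (card (subtree \<nu>) - card (subtree c)))"
  proof (intro add_mono order_trans [OF head_part_norm_le [OF assms(1) interior.hyps]] sum_mono)
    show "L2_set ?T1 ?A \<le> tail_sum Q \<nu> * B ^ (card (subtree \<nu>) - 1 - card (children T \<nu>))"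
      using tail_part_norm_le [OF interior.hyps] by simp
  qed (use interior.IH B_nonneg in \<open>auto intro: mult_right_mono\<close>)
  also have "\<dots> = trunc_error_bound Q \<nu>"
    by (rule trunc_error_bound_interior [OF interior.hyps, symmetric])
  finally show ?case .
qed

lemma tnorm_diff_eq_trunc_error:
  "tnorm N D (\<lambda>d. end_tensor N T D R W d - comp T D Q W {1..N} 0 d) = trunc_error Q {1..N}"
proof -
  have "prk N T D R {1..N} = 1"
    unfolding prk_def by simp
  then show ?thesis
    unfolding trunc_error_def tnorm_def end_tensor_def L2_set_Times idx_box_def mode_box_def
    by (simp add: lessThan_Suc L2_set_def sum_nonneg)
qed

lemma trunc_error_bound_root_le:
  assumes "0 \<le> \<epsilon>" "{1..N} \<in> interior T"
    and tail: "\<And>\<nu>. \<nu> \<in> interior T \<Longrightarrow>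
      tail_sum Q \<nu> \<le> \<epsilon> * inverse (real (card T - N)) * B powi (int (card (children T \<nu>)) + 1 - int (card T))"
  shows "trunc_error_bound Q {1..N} \<le> \<epsilon>"
proof -
  let ?k = "real (card T - N)"
  have "card (interior T) \<noteq> 0"
    using assms(2) finite_T finite_subset interior_in_T by (metis card_0_eq empty_iff subsetI)
  then have k: "0 < ?k"
    using card_interior by simp
  have each: "tail_sum Q \<nu> * B ^ (card T - 1 - card (children T \<nu>)) \<le> \<epsilon> * inverse ?k"
    if \<nu>: "\<nu> \<in> interior T" for \<nu>
  proof (rule mult_power_le_of_le_power_int)
    have "card (children T \<nu>) < card (subtree \<nu>)" "card (subtree \<nu>) \<le> card T"
      using card_children_less_card_subtree [OF \<nu>] finite_T subtree_subset_T by (auto intro: card_mono)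
    then have "int (card (children T \<nu>)) + 1 - int (card T) = - int (card T - 1 - card (children T \<nu>))"
      by linarith
    then show "tail_sum Q \<nu> \<le> \<epsilon> * inverse ?k * B powi - int (card T - 1 - card (children T \<nu>))"
      using tail [OF \<nu>] by simp
  qed (use assms(1) k B_nonneg in auto)
  have "interior T \<inter> T = interior T"
    using interior_in_T by blast
  then have "trunc_error_bound Q {1..N} = (\<Sum>\<nu>\<in>interior T. tail_sum Q \<nu> * B ^ (card T - 1 - card (children T \<nu>)))"
    unfolding trunc_error_bound_def subtree_root by simp
  also have "\<dots> \<le> (\<Sum>\<nu>\<in>interior T. \<epsilon> * inverse ?k)"
    using each by (rule sum_mono)
  also have "\<dots> = \<epsilon>"
    using card_interior k by simp
  finally show ?thesis .
qed

end

theorem proposition1: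
  fixes N :: nat and D :: "nat \<Rightarrow> nat" and T :: "nat set set"
    and R :: "nat set \<Rightarrow> nat" and W :: "nat set \<Rightarrow> nat \<Rightarrow> nat \<Rightarrow> real"
    and \<epsilon> :: real and R' :: "nat set \<Rightarrow> nat"
  assumes N2: "N \<ge> 2"
    and Dpos: "\<forall>n\<in>{1..N}. D n \<ge> 1"
    and tree: "mode_tree N T"
    and Rpos: "\<forall>\<nu>\<in>interior T. R \<nu> \<ge> 1"
    and R'pos: "\<forall>\<nu>\<in>interior T. R' \<nu> \<ge> 1"
    and ordered: "\<forall>\<nu>\<in>interior T. \<forall>r r'. r \<le> r' \<and> r' < R \<nu> \<longrightarrow>
                    sigma N T D R W \<nu> r' \<le> sigma N T D R W \<nu> r"
    and eps: "\<epsilon> \<ge> 0"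
    and tail: "\<forall>\<nu>\<in>interior T.
       (\<Sum>r\<in>{R' \<nu>..<R \<nu>}. sigma N T D R W \<nu> r)
         \<le> \<epsilon> * inverse (real (card T - N)) *
           (Max ((wnorm N T D R W) ` T)) powi (int (card (children T \<nu>)) + 1 - int (card T))"
  shows "Inf ((\<lambda>X. tnorm N D (\<lambda>d. end_tensor N T D R W d - X d)) `
           {X. \<forall>\<nu>\<in>T - {{1..N}}. mrank (matricize N D X \<nu>) \<le> R' (parent T \<nu>)}) \<le> \<epsilon>"
proof -
  interpret fixed_mode_tree N T
    using tree by (rule fixed_mode_tree.intro)
  define B where "B = Max (wnorm N T D R W ` T)"
  interpret bounded_factorization N T D R W B
    by unfold_locales (simp add: B_def finite_T)
  define Q where "Q = (\<lambda>\<nu>. min (R \<nu>) (R' \<nu>))"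
  have root: "{1..N} \<in> interior T"
    using interior_iff_card [OF root_in_T] N2 by simp
  have "Inf ((\<lambda>X. tnorm N D (\<lambda>d. end_tensor N T D R W d - X d)) `
      {X. \<forall>\<nu>\<in>T - {{1..N}}. mrank (matricize N D X \<nu>) \<le> R' (parent T \<nu>)})
      \<le> tnorm N D (\<lambda>d. end_tensor N T D R W d - comp T D Q W {1..N} 0 d)"
    using comp_root_mem_rank_constrained [of Q R' D W]
    by (intro cInf_lower imageI) (auto intro!: bdd_belowI [of _ 0] simp: Q_def tnorm_def sum_nonneg)
  also have "\<dots> = trunc_error Q {1..N}"
    by (rule tnorm_diff_eq_trunc_error)
  also have "\<dots> \<le> trunc_error_bound Q {1..N}"
    by (rule trunc_error_le [OF _ root_in_T]) (simp add: Q_def)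
  also have "\<dots> \<le> \<epsilon>"
    using tail by (intro trunc_error_bound_root_le eps root) (simp add: Q_def tail_sum_min B_def)
  finally show ?thesis .
qed

end
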